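(* Let $\alpha\in(0,1]$, $\beta\in(0,\alpha]$. For any $d_s$-dimensional cone $\mathcal{C}^s\subset\mathbb{R}^d$ transverse to $\mathbb{R}^{d_u}\times\{0\}$, there exists a constant $C_\#$ depending only on $\mathcal{C}^s$ such that for any $m\in\mathbb{R}^d$, any $1<C_0<C_1/2$ and any $\phi_F\in\mathcal{F}(m,\mathcal{C}^s,C_0,C_1)$, the map $\phi_F$ is a diffeomorphism onto its image with $\|D\phi_F\|_{C^\beta}\le C_\#$ and $\|D\phi_F^{-1}\|_{C^\beta}\le C_\#$. Moreover, $\phi_F(B(m,C_0))$ contains $B(m,C_\#^{-1}C_0)$.
   Context: $\mathbb{R}^d=\mathbb{R}^{d_u}\times\mathbb{R}^{d_s}$, $d=d_u+d_s$, $1\le d_s\le d-1$, points $z=(x,y)$. $B(x,r)$, $B(y,r)$ are closed Euclidean balls in $\mathbb{R}^{d_u}$, $\mathbb{R}^{d_s}$, and $B(z,r)=B(x,r)\times B(y,r)$. A cone of dimension $d'$ is a closed subset of $\mathbb{R}^d$ with nonempty interior, invariant under scalar multiplication, whose maximal contained linear subspace has dimension $d'$; it is transverse to a subspace $E$ if $E$ contains a $(d-d')$-dimensional subspace meeting the cone only at $0$. $\mathcal{F}(m,\mathcal{C}^s,C_0,C_1)$, for $m=(x_m,y_m)$: the set of maps $\phi_F:B(m,C_0)\to\mathbb{R}^d$, $\phi_F(x,y)=(F(x,y),y)$, where $F:B(m,C_0)\to\mathbb{R}^{d_u}$ is $C^1$, $(\partial_yF(z)w,w)\in\mathcal{C}^s$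 for all $w\in\mathbb{R}^{d_s}$ and $z\in B(m,C_0)$, $F(x,y_m)=x$ for all $x\in B(x_m,C_0)$, and for all $(x,y),(x',y')\in B(m,C_0)$: $|DF(x,y)-DF(x,y')|\le|y-y'|^\alpha/C_1$, $|DF(x,y)-DF(x',y)|\le|x-x'|^\beta/C_1$, and $|DF(x,y)-DF(x,y')-DF(x',y)+DF(x',y')|\le|x-x'|^\beta|y-y'|^{\alpha-\beta}/C_1$. The $C^\beta$ norm of a matrix-valued function is the sum of its sup norm and its $\beta$-Hölder constant. *)

theory Defs
  imports "HOL-Analysis.Analysis"
begin

text \<open>Points of R^d = R^{d_u} x R^{d_s} are pairs (x,y) :: 'u \<times> 's of Euclidean spaces.
  B(z,r) = B(x,r) \<times> B(y,r) with closed Euclidean balls.\<close>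

definition pbox :: "'u::euclidean_space \<times> 's::euclidean_space \<Rightarrow> real \<Rightarrow> ('u \<times> 's) set" where
  "pbox z r = cball (fst z) r \<times> cball (snd z) r"

definition cone_of_dim :: "('a::euclidean_space) set \<Rightarrow> nat \<Rightarrow> bool" where
  "cone_of_dim C d' \<longleftrightarrow> closed C \<and> interior C \<noteq> {} \<and>
     (\<forall>t::real. \<forall>v\<in>C. t *\<^sub>R v \<in> C) \<and>
     (\<exists>V. subspace V \<and> V \<subseteq> C \<and> dim V = d') \<and>
     (\<forall>V. subspace V \<and> V \<subseteq> C \<longrightarrow> dim V \<le> d')"

definition cone_transverse :: "('a::euclidean_space) set \<Rightarrow> nat \<Rightarrow> 'a set \<Rightarrow> bool" where
  "cone_transverse C d' E \<longleftrightarrow>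
     (\<exists>W. subspace W \<and> W \<subseteq> E \<and> dim W = DIM('a) - d' \<and> W \<inter> C = {0})"

text \<open>The class F(m, C^s, C0, C1) (depending on the fixed exponents alpha, beta),
  described through the function F; DF z is the derivative of F at z.\<close>

definition F_class ::
  "real \<Rightarrow> real \<Rightarrow> 'u::euclidean_space \<times> 's::euclidean_space \<Rightarrow> ('u \<times> 's) set
     \<Rightarrow> real \<Rightarrow> real \<Rightarrow> ('u \<times> 's \<Rightarrow> 'u) set" where
  "F_class \<alpha> \<beta> m Cs C0 C1 = {F. \<exists>DF :: 'u \<times> 's \<Rightarrow> ('u \<times> 's) \<Rightarrow>\<^sub>L 'u.
     (\<forall>z\<in>pbox m C0. (F has_derivative blinfun_apply (DF z)) (at z within pbox m C0)) \<and>
     continuous_on (pbox m C0) DF \<and>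
     (\<forall>z\<in>pbox m C0. \<forall>w::'s. (DF z (0, w), w) \<in> Cs) \<and>
     (\<forall>x\<in>cball (fst m) C0. F (x, snd m) = x) \<and>
     (\<forall>x y x' y'. (x, y) \<in> pbox m C0 \<longrightarrow> (x', y') \<in> pbox m C0 \<longrightarrow>
        norm (DF (x, y) - DF (x, y')) \<le> dist y y' powr \<alpha> / C1 \<and>
        norm (DF (x, y) - DF (x', y)) \<le> dist x x' powr \<beta> / C1 \<and>
        norm (DF (x, y) - DF (x, y') - DF (x', y) + DF (x', y'))
           \<le> dist x x' powr \<beta> * dist y y' powr (\<alpha> - \<beta>) / C1)}"

definition phi_of :: "('u \<times> 's \<Rightarrow> 'u) \<Rightarrow> 'u \<times> 's \<Rightarrow> 'u \<times> 's" where
  "phi_of F z = (F z, snd z)"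

text \<open>C^beta norm of a (linear-map valued) function on S: sup norm plus beta-Hoelder
  constant (computed in [0,\<infinity>], so that an unbounded quantity gives \<infinity>).\<close>

definition holder_norm :: "real \<Rightarrow> 'a::metric_space set \<Rightarrow> ('a \<Rightarrow> 'b::real_normed_vector) \<Rightarrow> ennreal" where
  "holder_norm \<beta> S g =
     (SUP z\<in>S. ennreal (norm (g z))) +
     (SUP p\<in>{(z, z'). z \<in> S \<and> z' \<in> S \<and> z \<noteq> z'}.
        ennreal (norm (g (fst p) - g (snd p)) / dist (fst p) (snd p) powr \<beta>))"

end

theory Submission imports Defs begin

text \<open>Transversality of the cone to the horizontal subspace and compactness of its unit sphere
  turn the cone condition into a uniform bound \<open>\<parallel>\<partial>\<^sub>yF\<parallel> \<le> K\<close>. Since \<open>\<partial>\<^sub>xF = id\<close> on the slice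
  \<open>y = y\<^sub>m\<close>, the Hoelder condition in \<open>y\<close> together with \<open>C\<^sub>0 < C\<^sub>1/2\<close> keeps \<open>\<partial>\<^sub>xF\<close> within \<open>1/2\<close> of the
  identity on the whole box. Hence \<open>\<phi>\<^sub>F\<close> is bi-Lipschitz and \<open>D\<phi>\<^sub>F\<close>, \<open>D\<phi>\<^sub>F\<^sup>-\<^sup>1\<close> are bounded by \<open>L = 3 + 2K\<close>, the
  Hoelder bounds pass to \<open>D\<phi>\<^sub>F\<^sup>-\<^sup>1\<close> through \<open>A\<^sup>-\<^sup>1 - B\<^sup>-\<^sup>1 = A\<^sup>-\<^sup>1 (B - A) B\<^sup>-\<^sup>1\<close>, and every horizontal slice
  of a smaller box is hit, by the Banach fixed point theorem applied to \<open>x \<mapsto> u - (F(x,v) - x)\<close>.\<close>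

lemma dim_horizontal_subspace:
  "dim {z :: 'u::euclidean_space \<times> 's::euclidean_space. snd z = 0} = DIM('u)"
proof -
  have "{z :: 'u \<times> 's. snd z = 0} = range (\<lambda>x. (x, 0))"
    by (auto simp: image_iff prod_eq_iff)
  moreover have "linear (\<lambda>x::'u. (x, 0::'s))"
    by (rule bounded_linear.linear[OF bounded_linear_Pair[OF bounded_linear_ident bounded_linear_zero]])
  then have "dim (range (\<lambda>x::'u. (x, 0::'s))) = dim (UNIV :: 'u set)"
    by (rule dim_image_eq) (auto intro: inj_onI)
  ultimately show ?thesis by simp
qed

lemma transverse_cone_horizontal_eq_0:
  fixes Cs :: "('u::euclidean_space \<times> 's::euclidean_space) set"
  assumes "cone_transverse Cs DIM('s) {z. snd z = 0}" and "(a, 0) \<in> Cs"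
  shows "a = 0"
proof -
  obtain W where W: "subspace W" "W \<subseteq> {z. snd z = 0}" "dim W = DIM('u \<times> 's) - DIM('s)"
    "W \<inter> Cs = {0}"
    using assms(1) unfolding cone_transverse_def by blast
  have "subspace {z :: 'u \<times> 's. snd z = 0}" unfolding subspace_def by simp
  moreover have "dim {z :: 'u \<times> 's. snd z = 0} \<le> dim W"
    using W(3) dim_horizontal_subspace[where 'u='u and 's='s] by simp
  ultimately have "W = {z. snd z = 0}"
    by (rule subspace_dim_equal[OF W(1) _ W(2)])
  then have "(a, 0) \<in> W \<inter> Cs" using assms(2) by simp
  then show "a = 0" using W(4) by (simp add: zero_prod_def)
qed

text \<open>\<open>1/K\<close> is the minimum of \<open>\<parallel>y\<parallel>\<close> over the compact unit sphere of the cone.\<close>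

lemma closed_cone_graph_bound:
  fixes Cs :: "('u::euclidean_space \<times> 's::euclidean_space) set"
  assumes closed: "closed Cs" and scaled: "\<And>t v. v \<in> Cs \<Longrightarrow> t *\<^sub>R v \<in> Cs"
    and horizontal: "\<And>a. (a, 0) \<in> Cs \<Longrightarrow> a = 0"
  obtains K where "0 \<le> K" "\<And>a b. (a, b) \<in> Cs \<Longrightarrow> norm a \<le> K * norm b"
proof -
  define P where "P = Cs \<inter> sphere 0 1"
  have normalised: "(1 / norm (a, b)) *\<^sub>R (a, b) \<in> P" if "(a, b) \<in> Cs" "(a, b) \<noteq> 0" for a b
  proof -
    have "norm ((1 / norm (a, b)) *\<^sub>R (a, b)) = 1" using that(2) by (simp del: scaleR_Pair)
    then show ?thesis using scaled[OF that(1)] by (simp add: P_def del: scaleR_Pair)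
  qed
  obtain \<delta> where \<delta>: "\<delta> > 0" "\<And>q. q \<in> P \<Longrightarrow> \<delta> \<le> norm (snd q)"
  proof (cases "P = {}")
    case False
    have "compact P" unfolding P_def using closed by (simp add: closed_Int_compact)
    moreover have "continuous_on P (\<lambda>q. norm (snd q))" by (intro continuous_intros)
    ultimately obtain p where p: "p \<in> P" and min: "\<And>q. q \<in> P \<Longrightarrow> norm (snd p) \<le> norm (snd q)"
      using continuous_attains_inf[OF _ False] by metis
    have "snd p \<noteq> 0"
    proof
      assume "snd p = 0"
      then have "fst p = 0" using p horizontal[of "fst p"] by (metis IntD1 P_def prod.collapse)
      with \<open>snd p = 0\<close> have "p = 0" by (simp add: prod_eq_iff)
      with p show False by (simp add: P_def)
    qed
    then show ?thesis using that[of "norm (snd p)"] min by simp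
  qed (use that[of 1] in simp)
  have "norm a \<le> (1 / \<delta>) * norm b" if ab: "(a, b) \<in> Cs" for a b
  proof (cases "(a, b) = 0")
    case False
    define n where "n = norm (a, b)"
    have "n > 0" using False by (simp add: n_def)
    have "\<delta> \<le> norm ((1 / n) *\<^sub>R b)"
      using \<delta>(2)[OF normalised[OF ab False]] by (simp add: n_def)
    then have "\<delta> * n \<le> norm b" using \<open>n > 0\<close> by (simp add: field_simps)
    moreover have "norm a \<le> n" unfolding n_def using norm_fst_le[of a b] by simp
    ultimately have "\<delta> * norm a \<le> norm b"
      using mult_left_mono[of "norm a" n \<delta>] \<delta>(1) by linarith
    then show ?thesis using \<delta>(1) by (simp add: field_simps)
  qed (simp add: zero_prod_def)
  then show ?thesis using that[of "1 / \<delta>"] \<delta>(1) by simp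
qed

lemma transverse_cone_graph_bound:
  fixes Cs :: "('u::euclidean_space \<times> 's::euclidean_space) set"
  assumes "cone_of_dim Cs d" and "cone_transverse Cs DIM('s) {z. snd z = 0}"
  obtains K where "0 \<le> K" "\<And>a b. (a, b) \<in> Cs \<Longrightarrow> norm a \<le> K * norm b"
proof -
  have closed: "closed Cs" and scaled: "\<And>t v. v \<in> Cs \<Longrightarrow> t *\<^sub>R v \<in> Cs"
    using assms(1) unfolding cone_of_dim_def by blast+
  have horizontal: "\<And>a. (a, 0) \<in> Cs \<Longrightarrow> a = 0"
    using transverse_cone_horizontal_eq_0[OF assms(2)] .
  show ?thesis
    using closed_cone_graph_bound[OF closed scaled horizontal] that by blast
qed

lemma holder_norm_le:
  fixes g :: "'a::metric_space \<Rightarrow> 'b::real_normed_vector"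
  assumes "\<And>z. z \<in> T \<Longrightarrow> norm (g z) \<le> M" and "0 \<le> M" and "0 \<le> H"
    and "\<And>z z'. z \<in> T \<Longrightarrow> z' \<in> T \<Longrightarrow> z \<noteq> z' \<Longrightarrow> norm (g z - g z') \<le> H * dist z z' powr \<beta>"
  shows "holder_norm \<beta> T g \<le> ennreal (M + H)"
proof -
  have "(SUP z\<in>T. ennreal (norm (g z))) \<le> ennreal M"
    using assms(1) by (intro SUP_least ennreal_leI)
  moreover have "(SUP p\<in>{(z, z'). z \<in> T \<and> z' \<in> T \<and> z \<noteq> z'}.
      ennreal (norm (g (fst p) - g (snd p)) / dist (fst p) (snd p) powr \<beta>)) \<le> ennreal H"
  proof (rule SUP_least, clarify)
    fix z z' assume "z \<in> T" "z' \<in> T" "z \<noteq> z'"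
    then have "norm (g z - g z') / dist z z' powr \<beta> \<le> H"
      using assms(4) by (simp add: divide_le_eq)
    then show "ennreal (norm (g (fst (z, z')) - g (snd (z, z'))) / dist (fst (z, z')) (snd (z, z')) powr \<beta>)
        \<le> ennreal H"
      by (simp add: ennreal_leI)
  qed
  ultimately have "holder_norm \<beta> T g \<le> ennreal M + ennreal H"
    unfolding holder_norm_def by (rule add_mono)
  then show ?thesis using assms(2,3) by simp
qed

lemma continuous_on_dominated_differences:
  fixes f :: "'a::metric_space \<Rightarrow> 'b::real_normed_vector" and g :: "'a \<Rightarrow> 'c::real_normed_vector"
  assumes "continuous_on T f" and "0 \<le> c"
    and "\<And>a b. a \<in> T \<Longrightarrow> b \<in> T \<Longrightarrow> norm (g a - g b) \<le> c * norm (f a - f b)"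
  shows "continuous_on T g"
  unfolding continuous_on_iff
proof (intro ballI allI impI)
  fix x e assume x: "x \<in> T" and "(0::real) < e"
  then have "e / (c + 1) > 0" using assms(2) by simp
  then obtain d where d: "d > 0" "\<forall>x'\<in>T. dist x' x < d \<longrightarrow> dist (f x') (f x) < e / (c + 1)"
    using assms(1) x unfolding continuous_on_iff by blast
  have "dist (g x') (g x) < e" if "x' \<in> T" "dist x' x < d" for x'
  proof -
    have "dist (g x') (g x) \<le> c * dist (f x') (f x)"
      using assms(3)[OF that(1) x] by (simp add: dist_norm)
    also have "\<dots> \<le> (c + 1) * dist (f x') (f x)" by (simp add: distrib_right)
    also have "\<dots> < (c + 1) * (e / (c + 1))"
      using d that assms(2) by (intro mult_strict_left_mono) auto
    finally show ?thesis using assms(2) by simp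
  qed
  then show "\<exists>d>0. \<forall>x'\<in>T. dist x' x < d \<longrightarrow> dist (g x') (g x) < e" using d(1) by blast
qed

lemma blinfun_inv_of_lower_bound:
  fixes A :: "'a::euclidean_space \<Rightarrow>\<^sub>L 'a"
  assumes "0 \<le> L" and lower: "\<And>v. norm v \<le> L * norm (A v)"
  shows "\<And>v. Blinfun (inv A) (A v) = v" and "\<And>v. A (Blinfun (inv A) v) = v"
    and "norm (Blinfun (inv A)) \<le> L"
proof -
  have "inj (blinfun_apply A)"
  proof (rule injI)
    fix a b assume "A a = A b"
    then show "a = b" using lower[of "a - b"] by (simp add: blinfun.diff_right)
  qed
  then obtain g where g: "linear g" "\<And>x. g (A x) = x" "\<And>x. A (g x) = x"
    using linear_injective_isomorphism[OF bounded_linear.linear[OF blinfun.bounded_linear_right]] by metis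
  have "inv (blinfun_apply A) = g" by (rule inv_equality) (use g in auto)
  moreover have "bounded_linear g" using g(1) by (simp add: linear_conv_bounded_linear)
  ultimately have B: "blinfun_apply (Blinfun (inv A)) = g" by (simp add: bounded_linear_Blinfun_apply)
  then show "\<And>v. Blinfun (inv A) (A v) = v" and "\<And>v. A (Blinfun (inv A) v) = v" using g by auto
  show "norm (Blinfun (inv A)) \<le> L"
    by (rule norm_blinfun_bound) (use assms(1) lower[of "g _"] g(3) B in auto)
qed

lemma norm_blinfun_inverse_diff:
  fixes A A' :: "'a::real_normed_vector \<Rightarrow>\<^sub>L 'b::real_normed_vector" and B B' :: "'b \<Rightarrow>\<^sub>L 'a"
  assumes "\<And>v. B (A v) = v" and "\<And>v. A' (B' v) = v"
  shows "norm (B - B') \<le> norm B * norm (A - A') * norm B'"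
proof (rule norm_blinfun_bound)
  fix v
  have "(B - B') v = B ((A' - A) (B' v))"
    using assms by (simp add: blinfun.diff_left blinfun.diff_right)
  also have "norm \<dots> \<le> norm B * norm ((A' - A) (B' v))" by (rule norm_blinfun)
  also have "\<dots> \<le> norm B * (norm (A' - A) * (norm B' * norm v))"
    by (intro mult_left_mono order.trans[OF norm_blinfun] norm_blinfun norm_ge_zero)
  finally show "norm ((B - B') v) \<le> norm B * norm (A - A') * norm B' * norm v"
    by (simp add: norm_minus_commute mult_ac)
qed simp

definition chart_constant :: "real \<Rightarrow> real" where
  "chart_constant K = (3 + 2 * K) + 2 * (3 + 2 * K) ^ 3"

text \<open>The hypotheses of \<open>F_class\<close>, with the cone condition replaced by the bound on \<open>\<partial>\<^sub>yF\<close> it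
  implies.\<close>

locale graph_chart =
  fixes \<alpha> \<beta> C0 C1 K :: real and m :: "'u::euclidean_space \<times> 's::euclidean_space"
    and F :: "'u \<times> 's \<Rightarrow> 'u" and DF :: "'u \<times> 's \<Rightarrow> ('u \<times> 's) \<Rightarrow>\<^sub>L 'u"
  assumes exponents: "0 < \<alpha>" "\<alpha> \<le> 1" "0 < \<beta>" "\<beta> \<le> \<alpha>"
    and radii: "1 < C0" "C0 < C1 / 2"
    and K_nonneg: "0 \<le> K"
    and F_derivative: "\<And>z. z \<in> pbox m C0 \<Longrightarrow>
      (F has_derivative blinfun_apply (DF z)) (at z within pbox m C0)"
    and DF_continuous: "continuous_on (pbox m C0) DF"
    and DF_vertical_bound: "\<And>z k. z \<in> pbox m C0 \<Longrightarrow> norm (DF z (0, k)) \<le> K * norm k"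
    and F_base: "\<And>x. x \<in> cball (fst m) C0 \<Longrightarrow> F (x, snd m) = x"
    and DF_holder_snd: "\<And>x y y'. (x, y) \<in> pbox m C0 \<Longrightarrow> (x, y') \<in> pbox m C0 \<Longrightarrow>
      norm (DF (x, y) - DF (x, y')) \<le> dist y y' powr \<alpha> / C1"
    and DF_holder_fst: "\<And>x x' y. (x, y) \<in> pbox m C0 \<Longrightarrow> (x', y) \<in> pbox m C0 \<Longrightarrow>
      norm (DF (x, y) - DF (x', y)) \<le> dist x x' powr \<beta> / C1"
begin

abbreviation "S \<equiv> pbox m C0"
abbreviation "xm \<equiv> fst m"
abbreviation "ym \<equiv> snd m"
abbreviation "\<phi> \<equiv> phi_of F"
abbreviation "L \<equiv> 3 + 2 * K"

lemma mem_S: "(x, y) \<in> S \<longleftrightarrow> x \<in> cball xm C0 \<and> y \<in> cball ym C0"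
  by (simp add: pbox_def)

lemma compact_S: "compact S"
  unfolding pbox_def by (intro compact_Times compact_cball)

lemma L_ge_1: "1 \<le> L"
  using K_nonneg by simp

lemma F_has_derivative_fst:
  assumes "y \<in> cball ym C0" "x \<in> cball xm C0"
  shows "((\<lambda>x. F (x, y)) has_derivative (\<lambda>h. DF (x, y) (h, 0))) (at x within cball xm C0)"
proof -
  have "((\<lambda>x. (x, y)) has_derivative (\<lambda>h. (h, 0))) (at x within cball xm C0)"
    by (rule has_derivative_Pair[OF has_derivative_ident has_derivative_const])
  moreover have "(\<lambda>x. (x, y)) ` cball xm C0 \<subseteq> S" using assms(1) by (auto simp: mem_S)
  ultimately show ?thesis using has_derivative_in_compose2[OF F_derivative _ assms(2)] by simp
qed

lemma F_has_derivative_snd: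
  assumes "x \<in> cball xm C0" "y \<in> cball ym C0"
  shows "((\<lambda>y. F (x, y)) has_derivative (\<lambda>k. DF (x, y) (0, k))) (at y within cball ym C0)"
proof -
  have "((\<lambda>y. (x, y)) has_derivative (\<lambda>k. (0, k))) (at y within cball ym C0)"
    by (rule has_derivative_Pair[OF has_derivative_const has_derivative_ident])
  moreover have "(\<lambda>y. (x, y)) ` cball ym C0 \<subseteq> S" using assms(1) by (auto simp: mem_S)
  ultimately show ?thesis using has_derivative_in_compose2[OF F_derivative _ assms(2)] by simp
qed

text \<open>Differentiating \<open>F (x, y\<^sub>m) = x\<close> gives the identity on the open slice; continuity of \<open>DF\<close>
  extends it to the closed one.\<close>

lemma DF_base_horizontal:
  assumes "x \<in> cball xm C0"
  shows "DF (x, ym) (h, 0) = h"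
proof -
  have on_ball: "DF (x, ym) (h, 0) = h" if x: "x \<in> ball xm C0" for x
  proof -
    have "ball xm C0 \<times> ball ym C0 \<subseteq> interior S"
      by (intro interior_maximal open_Times open_ball) (simp add: pbox_def Sigma_mono)
    moreover have "(x, ym) \<in> ball xm C0 \<times> ball ym C0" using x radii by simp
    ultimately have "(x, ym) \<in> interior S" by blast
    then have "(F has_derivative blinfun_apply (DF (x, ym))) (at (x, ym))"
      using F_derivative[OF interior_subset[THEN subsetD]] at_within_interior by metis
    then have "((\<lambda>x. F (x, ym)) has_derivative (\<lambda>h. DF (x, ym) (h, 0))) (at x)"
      by (rule has_derivative_compose[OF has_derivative_Pair[OF has_derivative_ident has_derivative_const]])
    then have "((\<lambda>x. x) has_derivative (\<lambda>h. DF (x, ym) (h, 0))) (at x)"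
    proof (rule has_derivative_transform_within_open[OF _ open_ball x])
      show "F (y, ym) = y" if "y \<in> ball xm C0" for y
        using F_base that by simp
    qed
    then have "(\<lambda>h. DF (x, ym) (h, 0)) = (\<lambda>h. h)"
      by (rule has_derivative_unique[OF _ has_derivative_ident])
    from fun_cong[OF this, of h] show ?thesis by simp
  qed
  have "(\<lambda>x. (x, ym)) ` cball xm C0 \<subseteq> S" using radii by (auto simp: mem_S)
  then have "continuous_on (cball xm C0) (\<lambda>x. DF (x, ym))"
    by (rule continuous_on_compose2[OF DF_continuous continuous_on_Pair[OF continuous_on_id continuous_on_const]])
  then have "continuous_on (cball xm C0) (\<lambda>x. DF (x, ym) (h, 0) - h)"
    by (intro continuous_intros)
  then have cont: "continuous_on (closure (ball xm C0)) (\<lambda>x. DF (x, ym) (h, 0) - h)"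
    using radii by simp
  have "x \<in> closure (ball xm C0)" using assms radii by simp
  then have "DF (x, ym) (h, 0) - h = 0"
    by (rule continuous_constant_on_closure[OF cont, rotated]) (simp add: on_ball)
  then show ?thesis by simp
qed

lemma norm_DF_minus_base:
  assumes "(x, y) \<in> S"
  shows "norm (DF (x, y) - DF (x, ym)) \<le> 1/2"
proof -
  have xy: "x \<in> cball xm C0" "y \<in> cball ym C0" using assms by (auto simp: mem_S)
  then have "norm (DF (x, y) - DF (x, ym)) \<le> dist y ym powr \<alpha> / C1"
    using DF_holder_snd assms radii by (simp add: mem_S)
  also have "dist y ym powr \<alpha> \<le> C0 powr \<alpha>"
    using xy exponents by (intro powr_mono2) (auto simp: dist_commute)
  also have "C0 powr \<alpha> \<le> C0 powr 1"
    using exponents radii by (intro powr_mono) auto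
  also have "C0 powr 1 / C1 \<le> 1/2"
    using radii by (simp add: field_simps)
  finally show ?thesis
    using radii by (simp add: divide_right_mono)
qed

lemma DF_horizontal_near_id:
  assumes "z \<in> S"
  shows "norm (DF z (h, 0) - h) \<le> 1/2 * norm h"
proof -
  obtain x y where z: "z = (x, y)" by fastforce
  then have "DF z (h, 0) - h = (DF (x, y) - DF (x, ym)) (h, 0)"
    using DF_base_horizontal assms by (simp add: blinfun.diff_left mem_S)
  also have "norm \<dots> \<le> norm (DF (x, y) - DF (x, ym)) * norm h"
    using norm_blinfun[of _ "(h, 0)"] by simp
  also have "\<dots> \<le> 1/2 * norm h"
    using norm_DF_minus_base assms z by (intro mult_right_mono) auto
  finally show ?thesis .
qed

lemma F_minus_fst_contraction:
  assumes "y \<in> cball ym C0" "x \<in> cball xm C0" "x' \<in> cball xm C0"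
  shows "norm ((F (x, y) - x) - (F (x', y) - x')) \<le> 1/2 * norm (x - x')"
proof (rule differentiable_bound[OF convex_cball _ _ assms(2,3)])
  show "((\<lambda>x. F (x, y) - x) has_derivative (\<lambda>h. DF (x, y) (h, 0) - h)) (at x within cball xm C0)"
    if "x \<in> cball xm C0" for x
    using F_has_derivative_fst[OF assms(1) that] by (intro derivative_intros)
  show "onorm (\<lambda>h. DF (x, y) (h, 0) - h) \<le> 1/2" if "x \<in> cball xm C0" for x
    using DF_horizontal_near_id that assms(1) by (intro onorm_le) (simp add: mem_S)
qed

lemma F_lipschitz_snd:
  assumes "x \<in> cball xm C0" "y \<in> cball ym C0" "y' \<in> cball ym C0"
  shows "norm (F (x, y) - F (x, y')) \<le> K * norm (y - y')"
proof (rule differentiable_bound[OF convex_cball _ _ assms(2,3)])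
  show "\<And>y. y \<in> cball ym C0 \<Longrightarrow>
      ((\<lambda>y. F (x, y)) has_derivative (\<lambda>k. DF (x, y) (0, k))) (at y within cball ym C0)"
    by (rule F_has_derivative_snd[OF assms(1)])
  show "onorm (\<lambda>k. DF (x, y) (0, k)) \<le> K" if "y \<in> cball ym C0" for y
    using DF_vertical_bound that assms(1) by (intro onorm_le) (simp add: mem_S)
qed

lemma norm_diff_le_phi_diff:
  assumes "z \<in> S" "z' \<in> S"
  shows "norm (z - z') \<le> L * norm (\<phi> z - \<phi> z')"
proof -
  obtain x y x' y' where zz: "z = (x, y)" "z' = (x', y')" by fastforce
  have m: "x \<in> cball xm C0" "y \<in> cball ym C0" "x' \<in> cball xm C0" "y' \<in> cball ym C0"
    using assms zz by (auto simp: mem_S)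
  define n where "n = norm (\<phi> z - \<phi> z')"
  have "\<phi> z - \<phi> z' = (F (x, y) - F (x', y'), y - y')"
    using zz by (simp add: phi_of_def)
  then have n1: "norm (F (x, y) - F (x', y')) \<le> n" and n2: "norm (y - y') \<le> n"
    unfolding n_def using norm_fst_le norm_snd_le by simp_all
  have "norm (x - x') \<le> norm (F (x, y) - F (x', y)) + norm ((F (x, y) - x) - (F (x', y) - x'))"
    using norm_triangle_ineq4[of "F (x, y) - F (x', y)" "(F (x, y) - x) - (F (x', y) - x')"]
    by (simp add: algebra_simps)
  moreover have "norm (F (x, y) - F (x', y)) \<le> n + norm (F (x', y) - F (x', y'))"
    using norm_triangle_ineq4[of "F (x, y) - F (x', y')" "F (x', y) - F (x', y')"] n1
    by (simp add: algebra_simps)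
  moreover have "K * norm (y - y') \<le> K * n" using n2 K_nonneg by (rule mult_left_mono)
  ultimately have "norm (x - x') \<le> 2 * n + 2 * K * n"
    using F_minus_fst_contraction[OF m(2,1,3)] F_lipschitz_snd[OF m(3,2,4)] by linarith
  moreover have "norm (z - z') \<le> norm (x - x') + norm (y - y')"
    using zz norm_Pair_le[of "x - x'" "y - y'"] by simp
  ultimately show ?thesis using n2 by (simp add: n_def algebra_simps)
qed

lemma inj_on_phi: "inj_on \<phi> S"
proof (rule inj_onI)
  fix z z' assume "z \<in> S" "z' \<in> S" "\<phi> z = \<phi> z'"
  then show "z = z'" using norm_diff_le_phi_diff[of z z'] by simp
qed


lemma F_slice_surjective:
  assumes C: "1 + K \<le> C" and u: "u \<in> cball xm (C0 / C)" and v: "v \<in> cball ym (C0 / C)"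
  obtains x where "x \<in> cball xm C0" "F (x, v) = u"
proof -
  have "C0 / C \<le> C0" using C K_nonneg radii by (simp add: divide_le_eq field_simps)
  then have v_C0: "v \<in> cball ym C0" using v by auto
  define T where "T x = u - (F (x, v) - x)" for x
  have "\<exists>!x\<in>cball xm C0. T x = x"
  proof (rule Banach_fix[where c="1/2"])
    show "T ` cball xm C0 \<subseteq> cball xm C0"
    proof clarify
      fix x assume x: "x \<in> cball xm C0"
      have "norm (F (x, v) - x) = norm (F (x, v) - F (x, ym))" using F_base[OF x] by simp
      also have "\<dots> \<le> K * norm (v - ym)" using radii by (intro F_lipschitz_snd x v_C0) simp
      also have "\<dots> \<le> K * (C0 / C)"
        using v K_nonneg by (intro mult_left_mono) (auto simp: dist_norm norm_minus_commute)
      finally have "norm (F (x, v) - x) \<le> K * (C0 / C)" .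
      moreover have "norm (xm - u) \<le> C0 / C" using u by (simp add: dist_norm)
      ultimately have "dist xm (T x) \<le> (1 + K) * C0 / C"
        using norm_triangle_ineq[of "xm - u" "F (x, v) - x"]
        by (simp add: T_def dist_norm algebra_simps add_divide_distrib)
      also have "\<dots> \<le> C0" using C K_nonneg radii by (simp add: divide_le_eq mult_right_mono)
      finally show "T x \<in> cball xm C0" by simp
    qed
    show "dist (T x) (T x') \<le> 1/2 * dist x x'" if "x \<in> cball xm C0" "x' \<in> cball xm C0" for x x'
      using F_minus_fst_contraction[OF v_C0 that]
      by (simp add: T_def dist_norm norm_minus_commute algebra_simps)
  qed (use radii in \<open>auto intro: compact_imp_complete\<close>)
  then obtain x where "x \<in> cball xm C0" "T x = x" by blast
  then show ?thesis using that by (simp add: T_def algebra_simps)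
qed

lemma pbox_subset_image_phi:
  assumes "1 + K \<le> C"
  shows "pbox m (C0 / C) \<subseteq> \<phi> ` S"
proof clarify
  fix u v assume "(u, v) \<in> pbox m (C0 / C)"
  then have u: "u \<in> cball xm (C0 / C)" and v: "v \<in> cball ym (C0 / C)" by (auto simp: pbox_def)
  obtain x where x: "x \<in> cball xm C0" "F (x, v) = u"
    using F_slice_surjective[OF assms u v] .
  have "C0 / C \<le> C0" using assms K_nonneg radii by (simp add: divide_le_eq field_simps)
  then have "(x, v) \<in> S" using x(1) v by (auto simp: mem_S)
  moreover have "\<phi> (x, v) = (u, v)" using x(2) by (simp add: phi_of_def)
  ultimately show "(u, v) \<in> \<phi> ` S" by (metis image_eqI)
qed


definition Dphi :: "'u \<times> 's \<Rightarrow> ('u \<times> 's) \<Rightarrow>\<^sub>L ('u \<times> 's)" where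
  "Dphi z = Blinfun (\<lambda>v. (DF z v, snd v))"

lemma Dphi_apply: "Dphi z v = (DF z v, snd v)"
proof -
  have "bounded_linear (\<lambda>v. (DF z v, snd v))"
    by (rule bounded_linear_Pair[OF blinfun.bounded_linear_right bounded_linear_snd])
  then show ?thesis by (simp add: Dphi_def bounded_linear_Blinfun_apply)
qed

lemma phi_has_derivative: "z \<in> S \<Longrightarrow> (\<phi> has_derivative blinfun_apply (Dphi z)) (at z within S)"
  unfolding phi_of_def[abs_def] Dphi_apply[abs_def]
  by (rule has_derivative_Pair[OF F_derivative has_derivative_snd[OF has_derivative_ident]])

lemma norm_Dphi_diff: "norm (Dphi z - Dphi z') \<le> norm (DF z - DF z')"
proof (rule norm_blinfun_bound)
  fix v
  have "(Dphi z - Dphi z') v = ((DF z - DF z') v, 0)"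
    by (simp add: blinfun.diff_left Dphi_apply)
  then show "norm ((Dphi z - Dphi z') v) \<le> norm (DF z - DF z') * norm v"
    by (simp add: norm_blinfun)
qed simp

lemma DF_split: "DF z (h, k) = DF z (h, 0) + DF z (0, k)"
  by (metis add_Pair add.right_neutral add.left_neutral blinfun.add_right)

lemma norm_Dphi: assumes "z \<in> S" shows "norm (Dphi z) \<le> L"
proof (rule norm_blinfun_bound)
  fix v :: "'u \<times> 's"
  obtain h k where v: "v = (h, k)" by fastforce
  have nh: "norm h \<le> norm v" and nk: "norm k \<le> norm v"
    using v norm_fst_le norm_snd_le by fastforce+
  have "norm (DF z (h, 0)) \<le> 3/2 * norm h"
    using DF_horizontal_near_id[OF assms, of h] norm_triangle_ineq2[of "DF z (h, 0)" h] by linarith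
  moreover have "norm (DF z (0, k)) \<le> K * norm k" using DF_vertical_bound assms by blast
  ultimately have "norm (DF z v) \<le> 3/2 * norm h + K * norm k"
    using DF_split[of z h k] v norm_triangle_ineq[of "DF z (h, 0)" "DF z (0, k)"] by simp
  also have "\<dots> \<le> (3/2 + K) * norm v"
    using nh nk K_nonneg by (simp add: distrib_right add_mono mult_left_mono)
  finally have "norm (Dphi z v) \<le> (3/2 + K) * norm v + norm v"
    using norm_Pair_le[of "DF z v" "snd v"] nk v by (simp add: Dphi_apply)
  also have "\<dots> \<le> L * norm v" using K_nonneg by (simp add: algebra_simps)
  finally show "norm (Dphi z v) \<le> L * norm v" .
qed (use K_nonneg in simp)

lemma norm_le_Dphi: assumes "z \<in> S" shows "norm v \<le> L * norm (Dphi z v)"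
proof -
  obtain h k where v: "v = (h, k)" by fastforce
  define n where "n = norm (Dphi z v)"
  have "Dphi z v = (DF z v, k)" using v by (simp add: Dphi_apply)
  then have n1: "norm (DF z v) \<le> n" and n2: "norm k \<le> n"
    unfolding n_def using norm_fst_le norm_snd_le by simp_all
  have "norm (DF z (h, 0)) \<le> n + K * norm k"
    using DF_split[of z h k] v n1 DF_vertical_bound[OF assms, of k]
      norm_triangle_ineq4[of "DF z v" "DF z (0, k)"]
    by (simp add: algebra_simps)
  moreover have "1/2 * norm h \<le> norm (DF z (h, 0))"
    using DF_horizontal_near_id[OF assms, of h] norm_triangle_ineq3[of "DF z (h, 0)" h]
    by (simp add: norm_minus_commute)
  moreover have "K * norm k \<le> K * n" using n2 K_nonneg by (rule mult_left_mono)
  ultimately have "norm h \<le> 2 * n + 2 * K * n" by linarith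
  then have "norm v \<le> (2 * n + 2 * K * n) + n" using norm_Pair_le[of h k] v n2 by simp
  then show ?thesis by (simp add: n_def algebra_simps)
qed

text \<open>The \<open>\<alpha>\<close>-Hoelder bound in \<open>y\<close> is traded for a \<open>\<beta>\<close>-Hoelder one using \<open>|y - y'| \<le> 2 C\<^sub>0 < C\<^sub>1\<close>.\<close>

lemma DF_holder:
  assumes "z \<in> S" "z' \<in> S"
  shows "norm (DF z - DF z') \<le> 2 * dist z z' powr \<beta>"
proof -
  obtain x y x' y' where zz: "z = (x, y)" "z' = (x', y')" by fastforce
  have m: "(x, y) \<in> S" "(x, y') \<in> S" "(x', y') \<in> S" using assms zz by (auto simp: mem_S)
  have dy: "dist y y' \<le> dist z z'" and dx: "dist x x' \<le> dist z z'"
    using zz by (auto simp: dist_Pair_Pair intro: real_sqrt_sum_squares_ge1 real_sqrt_sum_squares_ge2)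
  have "dist y y' \<le> dist y ym + dist ym y'" by (rule dist_triangle)
  then have dyC: "dist y y' \<le> 2 * C0" using m by (auto simp: mem_S dist_commute)
  have "dist y y' powr \<alpha> / C1 \<le> dist z z' powr \<beta>"
  proof (cases "y = y'")
    case False
    have "dist y y' powr \<alpha> = dist y y' powr \<beta> * dist y y' powr (\<alpha> - \<beta>)"
      using False by (simp add: powr_add[symmetric])
    also have "\<dots> \<le> dist z z' powr \<beta> * (2 * C0) powr 1"
    proof (intro mult_mono)
      show "dist y y' powr \<beta> \<le> dist z z' powr \<beta>" using dy exponents by (intro powr_mono2) auto
      have "dist y y' powr (\<alpha> - \<beta>) \<le> (2 * C0) powr (\<alpha> - \<beta>)"
        using dyC exponents by (intro powr_mono2) auto
      also have "\<dots> \<le> (2 * C0) powr 1" using exponents radii by (intro powr_mono) auto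
      finally show "dist y y' powr (\<alpha> - \<beta>) \<le> (2 * C0) powr 1" .
    qed auto
    finally have "dist y y' powr \<alpha> / C1 \<le> dist z z' powr \<beta> * (2 * C0 / C1)"
      using radii by (simp add: divide_right_mono)
    also have "\<dots> \<le> dist z z' powr \<beta>"
      using radii by (intro mult_left_le) (auto simp: field_simps)
    finally show ?thesis .
  qed simp
  moreover have "dist x x' powr \<beta> / C1 \<le> dist z z' powr \<beta>"
  proof -
    have "dist x x' powr \<beta> / C1 \<le> dist z z' powr \<beta> / C1"
      using dx exponents radii by (intro divide_right_mono powr_mono2) auto
    also have "\<dots> \<le> dist z z' powr \<beta>"
      using radii by (simp add: divide_le_eq mult_le_cancel_left1)
    finally show ?thesis .
  qed
  moreover have "norm (DF z - DF z') \<le> norm (DF (x, y) - DF (x, y')) + norm (DF (x, y') - DF (x', y'))"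
    using zz norm_triangle_ineq[of "DF (x, y) - DF (x, y')" "DF (x, y') - DF (x', y')"] by simp
  ultimately show ?thesis
    using DF_holder_snd[OF m(1,2)] DF_holder_fst[OF m(2,3)] by linarith
qed

lemma Dphi_holder:
  assumes "z \<in> S" "z' \<in> S"
  shows "norm (Dphi z - Dphi z') \<le> 2 * dist z z' powr \<beta>"
  using norm_Dphi_diff DF_holder[OF assms] by (rule order.trans)


definition Dpsi :: "'u \<times> 's \<Rightarrow> ('u \<times> 's) \<Rightarrow>\<^sub>L ('u \<times> 's)" where
  "Dpsi z = Blinfun (inv (blinfun_apply (Dphi z)))"

lemma
  assumes "z \<in> S"
  shows Dpsi_Dphi: "Dpsi z (Dphi z v) = v" and Dphi_Dpsi: "Dphi z (Dpsi z v) = v"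
    and norm_Dpsi: "norm (Dpsi z) \<le> L"
  using blinfun_inv_of_lower_bound[OF _ norm_le_Dphi[OF assms]] K_nonneg
  unfolding Dpsi_def by simp_all

lemma norm_Dpsi_diff:
  assumes "z \<in> S" "z' \<in> S"
  shows "norm (Dpsi z - Dpsi z') \<le> L * L * norm (Dphi z - Dphi z')"
proof -
  have "norm (Dpsi z - Dpsi z') \<le> norm (Dpsi z) * norm (Dphi z - Dphi z') * norm (Dpsi z')"
    using Dpsi_Dphi[OF assms(1)] Dphi_Dpsi[OF assms(2)] by (rule norm_blinfun_inverse_diff)
  also have "\<dots> \<le> L * norm (Dphi z - Dphi z') * L"
    using norm_Dpsi assms K_nonneg by (intro mult_mono) auto
  finally show ?thesis by (simp add: mult_ac)
qed

lemma continuous_on_Dphi: "continuous_on S Dphi"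
  by (rule continuous_on_dominated_differences[OF DF_continuous, of 1]) (simp_all add: norm_Dphi_diff)

lemma continuous_on_Dpsi: "continuous_on S Dpsi"
  by (rule continuous_on_dominated_differences[OF continuous_on_Dphi, of "L * L"])
    (simp_all add: K_nonneg norm_Dpsi_diff)

definition psi :: "'u \<times> 's \<Rightarrow> 'u \<times> 's" where
  "psi = inv_into S \<phi>"

lemma psi_phi: "z \<in> S \<Longrightarrow> psi (\<phi> z) = z"
  using inj_on_phi by (simp add: psi_def)

lemma psi_in_S: "w \<in> \<phi> ` S \<Longrightarrow> psi w \<in> S"
  by (simp add: psi_def inv_into_into)

lemma phi_psi: "w \<in> \<phi> ` S \<Longrightarrow> \<phi> (psi w) = w"
  by (simp add: psi_def f_inv_into_f)

lemma continuous_on_psi: "continuous_on (\<phi> ` S) psi"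
proof (rule continuous_on_inv[OF _ compact_S])
  show "continuous_on S \<phi>" using phi_has_derivative by (rule has_derivative_continuous_on)
qed (simp add: psi_phi)

lemma psi_has_derivative:
  assumes w: "w \<in> \<phi> ` S"
  shows "(psi has_derivative blinfun_apply (Dpsi (psi w))) (at w within \<phi> ` S)"
proof -
  have "(psi has_derivative blinfun_apply (Dpsi (psi w))) (at (\<phi> (psi w)) within \<phi> ` S)"
  proof (rule has_derivative_inverse_within[OF phi_has_derivative[OF psi_in_S[OF w]]])
    show "continuous (at (\<phi> (psi w)) within \<phi> ` S) psi"
      using continuous_on_psi psi_in_S[OF w] by (simp add: continuous_on_eq_continuous_within)
    show "blinfun_apply (Dpsi (psi w)) \<circ> blinfun_apply (Dphi (psi w)) = id"
      using Dpsi_Dphi[OF psi_in_S[OF w]] by (simp add: fun_eq_iff)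
    show "linear (blinfun_apply (Dpsi (psi w)))" by (rule bounded_linear.linear[OF blinfun.bounded_linear_right])
  qed (simp_all add: psi_in_S[OF w] psi_phi)
  then show ?thesis using phi_psi[OF w] by simp
qed

lemma holder_norm_Dphi: "holder_norm \<beta> S Dphi \<le> ennreal (L + 2)"
proof (rule holder_norm_le)
  show "\<And>z. z \<in> S \<Longrightarrow> norm (Dphi z) \<le> L" by (rule norm_Dphi)
  show "\<And>z z'. z \<in> S \<Longrightarrow> z' \<in> S \<Longrightarrow> z \<noteq> z' \<Longrightarrow> norm (Dphi z - Dphi z') \<le> 2 * dist z z' powr \<beta>"
    by (rule Dphi_holder)
qed (simp_all add: K_nonneg)

text \<open>Since \<open>\<psi>\<close> is \<open>L\<close>-Lipschitz, the Hoelder constant of \<open>D\<psi> = Dpsi \<circ> \<psi>\<close> picks up a factor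
  \<open>L\<^sup>\<beta> \<le> L\<close> on top of the \<open>L\<^sup>2\<close> coming from inversion.\<close>

lemma holder_norm_Dpsi: "holder_norm \<beta> (\<phi> ` S) (\<lambda>w. Dpsi (psi w)) \<le> ennreal (L + 2 * L ^ 3)"
proof (rule holder_norm_le)
  fix w w' assume w: "w \<in> \<phi> ` S" "w' \<in> \<phi> ` S"
  define z z' where "z = psi w" and "z' = psi w'"
  have z: "z \<in> S" "z' \<in> S" using psi_in_S w by (auto simp: z_def z'_def)
  have "dist z z' \<le> L * dist w w'"
    using norm_diff_le_phi_diff[OF z] phi_psi w by (simp add: z_def z'_def dist_norm)
  then have "dist z z' powr \<beta> \<le> (L * dist w w') powr \<beta>"
    using exponents by (intro powr_mono2) auto
  also have "\<dots> = L powr \<beta> * dist w w' powr \<beta>"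
    using K_nonneg by (simp add: powr_mult)
  also have "\<dots> \<le> L * dist w w' powr \<beta>"
    using L_ge_1 exponents powr_mono[of \<beta> 1 L] by (intro mult_right_mono) auto
  finally have dz: "dist z z' powr \<beta> \<le> L * dist w w' powr \<beta>" .
  have "norm (Dpsi z - Dpsi z') \<le> L * L * norm (Dphi z - Dphi z')" by (rule norm_Dpsi_diff[OF z])
  also have "\<dots> \<le> L * L * (2 * dist z z' powr \<beta>)"
    using Dphi_holder[OF z] K_nonneg by (intro mult_left_mono) simp_all
  also have "\<dots> \<le> L * L * (2 * (L * dist w w' powr \<beta>))"
    using dz K_nonneg by (intro mult_left_mono) auto
  finally show "norm (Dpsi (psi w) - Dpsi (psi w')) \<le> 2 * L ^ 3 * dist w w' powr \<beta>"
    by (simp add: z_def z'_def power3_eq_cube mult_ac)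
next
  show "\<And>w. w \<in> \<phi> ` S \<Longrightarrow> norm (Dpsi (psi w)) \<le> L" by (rule norm_Dpsi[OF psi_in_S])
qed (simp_all add: K_nonneg)


lemma phi_diffeomorphism:
  "inj_on \<phi> S \<and>
   (\<exists>D\<phi> D\<psi> \<psi>.
      (\<forall>z\<in>S. (\<phi> has_derivative blinfun_apply (D\<phi> z)) (at z within S)) \<and>
      continuous_on S D\<phi> \<and>
      (\<forall>z\<in>S. \<psi> (\<phi> z) = z) \<and>
      (\<forall>w\<in>\<phi> ` S.
         (\<psi> has_derivative blinfun_apply (D\<psi> w)) (at w within \<phi> ` S) \<and>
         D\<psi> w o\<^sub>L D\<phi> (\<psi> w) = id_blinfun \<and> D\<phi> (\<psi> w) o\<^sub>L D\<psi> w = id_blinfun) \<and>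
      continuous_on (\<phi> ` S) D\<psi> \<and>
      holder_norm \<beta> S D\<phi> \<le> ennreal (chart_constant K) \<and>
      holder_norm \<beta> (\<phi> ` S) D\<psi> \<le> ennreal (chart_constant K)) \<and>
   pbox m (C0 / chart_constant K) \<subseteq> \<phi> ` S"
proof (intro conjI exI ballI)
  have "1 \<le> L ^ 3" using L_ge_1 by simp
  then have C: "L + 2 \<le> chart_constant K" "L + 2 * L ^ 3 = chart_constant K" "1 + K \<le> chart_constant K"
    using K_nonneg by (simp_all add: chart_constant_def)
  show "holder_norm \<beta> S Dphi \<le> ennreal (chart_constant K)"
    using holder_norm_Dphi ennreal_leI[OF C(1)] by (rule order.trans)
  show "holder_norm \<beta> (\<phi> ` S) (\<lambda>w. Dpsi (psi w)) \<le> ennreal (chart_constant K)"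
    using holder_norm_Dpsi by (simp add: C(2))
  show "pbox m (C0 / chart_constant K) \<subseteq> \<phi> ` S" using C(3) by (rule pbox_subset_image_phi)
  show "continuous_on (\<phi> ` S) (\<lambda>w. Dpsi (psi w))"
    using continuous_on_compose2[OF continuous_on_Dpsi continuous_on_psi] psi_in_S by blast
  fix w assume "w \<in> \<phi> ` S"
  then show "Dpsi (psi w) o\<^sub>L Dphi (psi w) = id_blinfun" "Dphi (psi w) o\<^sub>L Dpsi (psi w) = id_blinfun"
    using Dpsi_Dphi Dphi_Dpsi psi_in_S by (simp_all add: blinfun_eqI)
qed (simp_all add: inj_on_phi phi_has_derivative continuous_on_Dphi psi_phi psi_has_derivative)

end

lemma graph_chart_if_F_class:
  assumes "0 < \<alpha>" "\<alpha> \<le> 1" "0 < \<beta>" "\<beta> \<le> \<alpha>" "0 \<le> K"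
    and "\<And>a b. (a, b) \<in> Cs \<Longrightarrow> norm a \<le> K * norm b"
    and "1 < C0" "C0 < C1 / 2" "F \<in> F_class \<alpha> \<beta> m Cs C0 C1"
  shows "\<exists>DF. graph_chart \<alpha> \<beta> C0 C1 K m F DF"
proof -
  obtain DF where DF:
      "\<forall>z\<in>pbox m C0. (F has_derivative blinfun_apply (DF z)) (at z within pbox m C0)"
      "continuous_on (pbox m C0) DF"
      "\<forall>z\<in>pbox m C0. \<forall>w. (DF z (0, w), w) \<in> Cs"
      "\<forall>x\<in>cball (fst m) C0. F (x, snd m) = x"
      "\<forall>x y x' y'. (x, y) \<in> pbox m C0 \<longrightarrow> (x', y') \<in> pbox m C0 \<longrightarrow>
         norm (DF (x, y) - DF (x, y')) \<le> dist y y' powr \<alpha> / C1 \<and>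
         norm (DF (x, y) - DF (x', y)) \<le> dist x x' powr \<beta> / C1"
    using assms(9) unfolding F_class_def by blast
  have "graph_chart \<alpha> \<beta> C0 C1 K m F DF"
    by unfold_locales (use assms DF in \<open>simp_all\<close>)
  then show ?thesis by (rule exI[of _ DF])
qed

theorem mainTheorem7:
  fixes \<alpha> \<beta> :: real
  assumes "0 < \<alpha>" "\<alpha> \<le> 1" "0 < \<beta>" "\<beta> \<le> \<alpha>"
  shows "\<forall>Cs :: ('u::euclidean_space \<times> 's::euclidean_space) set.
     cone_of_dim Cs DIM('s) \<and> cone_transverse Cs DIM('s) {z. snd z = 0} \<longrightarrow>
     (\<exists>Csharp > 0. \<forall>m C0 C1 F. 1 < C0 \<and> C0 < C1 / 2 \<and> F \<in> F_class \<alpha> \<beta> m Cs C0 C1 \<longrightarrow>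
        inj_on (phi_of F) (pbox m C0) \<and>
        (\<exists>D\<phi> D\<psi> \<psi>.
           (\<forall>z\<in>pbox m C0. (phi_of F has_derivative blinfun_apply (D\<phi> z)) (at z within pbox m C0)) \<and>
           continuous_on (pbox m C0) D\<phi> \<and>
           (\<forall>z\<in>pbox m C0. \<psi> (phi_of F z) = z) \<and>
           (\<forall>w\<in>phi_of F ` pbox m C0.
              (\<psi> has_derivative blinfun_apply (D\<psi> w)) (at w within phi_of F ` pbox m C0) \<and>
              D\<psi> w o\<^sub>L D\<phi> (\<psi> w) = id_blinfun \<and> D\<phi> (\<psi> w) o\<^sub>L D\<psi> w = id_blinfun) \<and>
           continuous_on (phi_of F ` pbox m C0) D\<psi> \<and>
           holder_norm \<beta> (pbox m C0) D\<phi> \<le> ennreal Csharp \<and>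
           holder_norm \<beta> (phi_of F ` pbox m C0) D\<psi> \<le> ennreal Csharp) \<and>
        pbox m (C0 / Csharp) \<subseteq> phi_of F ` pbox m C0)"
  apply (intro allI impI)
  subgoal premises cone for Cs
  proof -
    obtain K where K: "0 \<le> K" "\<And>a b. (a, b) \<in> Cs \<Longrightarrow> norm a \<le> K * norm b"
      using transverse_cone_graph_bound cone by blast
    show ?thesis
      apply (rule exI[of _ "chart_constant K"], rule conjI)
      subgoal using K(1) by (simp add: chart_constant_def add_pos_nonneg)
      apply (intro allI impI, elim conjE)
      subgoal premises F for m C0 C1 F
      proof -
        obtain DF where "graph_chart \<alpha> \<beta> C0 C1 K m F DF"
          using graph_chart_if_F_class[OF assms K F] by blast
        then show ?thesis by (rule graph_chart.phi_diffeomorphism)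
      qed
      done
  qed
  done

end
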